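(* Let $T$ be an infinite set and $R_{T.3}=\mathbf{R}^{(T^3)}=\mathbf{R}^T\times\mathbf{R}^T\times\mathbf{R}^T$, whose cells are $\mathbf{I}[\mathbf{N}]=I^1[N^1]\times I^2[N^2]\times I^3[N^3]$ with $\mathbf{N}=(N^1,N^2,N^3)$ and the $N^j\in\mathcal{N}(T)$ chosen independently. For $j=1,2,3$ let $L^j:\bar{\mathbf{R}}^T\to\mathcal{N}(T)$ be functions and $\delta^j_t:\bar{\mathbf{R}}\to\,]0,\infty[$ ($t\in T$) gauges in $\mathbf{R}$; let $\mathbf{L}(\mathbf{x})=(L^1(x^1_T),L^2(x^2_T),L^3(x^3_T))$ and $\gamma=(\mathbf{L},\{\delta^j_t\}_{t\in T,\,j=1,2,3})$. Then there exists a $\gamma$-fine division of $R_{T.3}$.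
   Context: $\mathcal{N}(T)$ is the family of finite subsets of $T$. A cell of $\mathbf{R}$ is $]u,v]$ ($u<v$ real), $]-\infty,v]$, or $]u,\infty[$; $y\in\bar{\mathbf{R}}=[-\infty,\infty]$ is associated with $I$ if $y$ is a vertex of $I$; for a gauge $\delta$ in $\mathbf{R}$, an associated $(y,I)$ is $\delta$-fine if: $I$ bounded and $|I|<\delta(y)$; or $y=-\infty$, $I=\,]-\infty,v]$, $v<-1/\delta(y)$; or $y=+\infty$, $I=\,]u,\infty[$, $u>1/\delta(y)$. Points of $R_{T.3}$ are $\mathbf{x}=(x^1_T,x^2_T,x^3_T)$ with $x^j_T=(x^j_t)_{t\in T}$ (tags in $(\bar{\mathbf{R}}^T)^3$). For each $j$, $I^j[N^j]=\prod_{t\in N^j}I^j_t\times\mathbf{R}^{T\setminus N^j}$ with each $I^j_t$ a cell of $\mathbf{R}$. $(\mathbf{x},\mathbf{I}[\mathbf{N}])$ is associated if $(x^j_t,I^j_t)$ is associated for all $j$ and $t\in N^j$; it is $\gamma$-fine if, for $j=1,2,3$, $N^j\supseteq L^j(x^j_T)$ and $(x^j_t,I^j_t)$ is $\delta^j_t$-fine for every $t\in N^j$. A division is a finite collection of associated pairs whose cells are pairwise disjoint with union $R_{T.3}$; it is $\gamma$-fine if every pair is. *)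

theory Defs
  imports "HOL-Library.FuncSet" "HOL-Library.Extended_Real"
begin

text \<open>A cell of the real line is encoded by its pair of vertices (u,v) in the extended reals:
 ]u,v] with u<v real, ]-\<infinity>,v] with v real, or ]u,\<infinity>[ with u real.\<close>

type_synonym cell1 = "ereal \<times> ereal"

definition is_cell1 :: "cell1 \<Rightarrow> bool" where
  "is_cell1 c \<longleftrightarrow> fst c < snd c \<and> \<not> (fst c = -\<infinity> \<and> snd c = \<infinity>)"

definition cell1_set :: "cell1 \<Rightarrow> real set" where
  "cell1_set c = {x. fst c < ereal x \<and> ereal x \<le> snd c}"

definition assoc1 :: "ereal \<Rightarrow> cell1 \<Rightarrow> bool" where
  "assoc1 y c \<longleftrightarrow> y = fst c \<or> y = snd c"

definition fine1 :: "(ereal \<Rightarrow> real) \<Rightarrow> ereal \<Rightarrow> cell1 \<Rightarrow> bool" where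
  "fine1 \<delta> y c \<longleftrightarrow>
     (\<exists>u v. c = (ereal u, ereal v) \<and> v - u < \<delta> y)
   \<or> (y = -\<infinity> \<and> fst c = -\<infinity> \<and> (\<exists>v. snd c = ereal v \<and> v < - 1 / \<delta> y))
   \<or> (y = \<infinity> \<and> snd c = \<infinity> \<and> (\<exists>u. fst c = ereal u \<and> u > 1 / \<delta> y))"

abbreviation J3 :: "nat set" where "J3 \<equiv> {1,2,3}"

definition space3 :: "'a set \<Rightarrow> (nat \<Rightarrow> 'a \<Rightarrow> real) set" where
  "space3 T = J3 \<rightarrow>\<^sub>E (T \<rightarrow>\<^sub>E UNIV)"

definition tags3 :: "'a set \<Rightarrow> (nat \<Rightarrow> 'a \<Rightarrow> ereal) set" where
  "tags3 T = J3 \<rightarrow>\<^sub>E (T \<rightarrow>\<^sub>E UNIV)"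

text \<open>A cell I[N] = I^1[N^1] x I^2[N^2] x I^3[N^3], encoded by N (N j in N(T)) and
  the one-dimensional cells I j t for t in N j.\<close>
type_synonym 'a cell3 = "(nat \<Rightarrow> 'a set) \<times> (nat \<Rightarrow> 'a \<Rightarrow> cell1)"

definition is_cell3 :: "'a set \<Rightarrow> 'a cell3 \<Rightarrow> bool" where
  "is_cell3 T C \<longleftrightarrow> (\<forall>j\<in>J3. finite (fst C j) \<and> fst C j \<subseteq> T \<and>
                         (\<forall>t\<in>fst C j. is_cell1 (snd C j t)))"

definition cell3_set :: "'a set \<Rightarrow> 'a cell3 \<Rightarrow> (nat \<Rightarrow> 'a \<Rightarrow> real) set" where
  "cell3_set T C = {X \<in> space3 T. \<forall>j\<in>J3. \<forall>t\<in>fst C j. X j t \<in> cell1_set (snd C j t)}"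

definition assoc3 :: "(nat \<Rightarrow> 'a \<Rightarrow> ereal) \<Rightarrow> 'a cell3 \<Rightarrow> bool" where
  "assoc3 x C \<longleftrightarrow> (\<forall>j\<in>J3. \<forall>t\<in>fst C j. assoc1 (x j t) (snd C j t))"

definition gamma_fine :: "(nat \<Rightarrow> ('a \<Rightarrow> ereal) \<Rightarrow> 'a set) \<Rightarrow> (nat \<Rightarrow> 'a \<Rightarrow> ereal \<Rightarrow> real)
    \<Rightarrow> (nat \<Rightarrow> 'a \<Rightarrow> ereal) \<Rightarrow> 'a cell3 \<Rightarrow> bool" where
  "gamma_fine L \<delta> x C \<longleftrightarrow> (\<forall>j\<in>J3. L j (x j) \<subseteq> fst C j \<and>
       (\<forall>t\<in>fst C j. fine1 (\<delta> j t) (x j t) (snd C j t)))"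

definition division3 :: "'a set \<Rightarrow> ((nat \<Rightarrow> 'a \<Rightarrow> ereal) \<times> 'a cell3) set \<Rightarrow> bool" where
  "division3 T D \<longleftrightarrow> finite D
     \<and> (\<forall>(x, C)\<in>D. x \<in> tags3 T \<and> is_cell3 T C \<and> assoc3 x C)
     \<and> (\<forall>p\<in>D. \<forall>q\<in>D. p \<noteq> q \<longrightarrow> cell3_set T (snd p) \<inter> cell3_set T (snd q) = {})
     \<and> (\<Union>p\<in>D. cell3_set T (snd p)) = space3 T"

definition gamma_fine_division3 :: "'a set \<Rightarrow> (nat \<Rightarrow> ('a \<Rightarrow> ereal) \<Rightarrow> 'a set)
    \<Rightarrow> (nat \<Rightarrow> 'a \<Rightarrow> ereal \<Rightarrow> real) \<Rightarrow> ((nat \<Rightarrow> 'a \<Rightarrow> ereal) \<times> 'a cell3) set \<Rightarrow> bool" where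
  "gamma_fine_division3 T L \<delta> D \<longleftrightarrow> division3 T D \<and> (\<forall>(x, C)\<in>D. gamma_fine L \<delta> x C)"

end

(* Cousin's lemma gives, for every coordinate (j,t), a finite delta^j_t-fine division Q^j_t of
   the real line into cells tagged at a vertex. Sending a point X of R_{T.3} to the cells of the
   Q^j_t that contain its coordinates X^j_t maps R_{T.3} into the product of the finite sets Q^j_t,
   and a tagged cell I[N] is the preimage of a cylinder of that product fixing the coordinates in N.
   So it suffices to partition the product into finitely many cylinders, each fixing at least
   the coordinates that L demands at its tag. Such a partition exists by a compactness argument,
   run with Zorn's lemma on the partial assignments that admit no partition. *)

theory Submission
  imports Defs "HOL-Library.Disjoint_Sets"
begin

section \<open>Fine divisions of the real line\<close>

definition fine_division1 :: "(ereal \<Rightarrow> real) \<Rightarrow> real set \<Rightarrow> (ereal \<times> cell1) set \<Rightarrow> bool" where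
  "fine_division1 \<delta> X Q \<longleftrightarrow> finite Q
     \<and> (\<forall>(y, c)\<in>Q. is_cell1 c \<and> assoc1 y c \<and> fine1 \<delta> y c)
     \<and> disjoint_family_on (\<lambda>p. cell1_set (snd p)) Q
     \<and> (\<Union>p\<in>Q. cell1_set (snd p)) = X"

lemma cell1_set_real [simp]: "cell1_set (ereal u, ereal v) = {u<..v}"
  by (auto simp: cell1_set_def)

lemma cell1_set_atMost [simp]: "cell1_set (-\<infinity>, ereal v) = {..v}"
  by (auto simp: cell1_set_def)

lemma cell1_set_greaterThan [simp]: "cell1_set (ereal u, \<infinity>) = {u<..}"
  by (auto simp: cell1_set_def)

lemma fine_division1_unique_cell:
  assumes "fine_division1 \<delta> X Q" "p \<in> Q" "q \<in> Q" "x \<in> cell1_set (snd p)" "x \<in> cell1_set (snd q)"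
  shows "p = q"
  using assms disjoint_family_onD[of "\<lambda>p. cell1_set (snd p)" Q p q]
  unfolding fine_division1_def by blast

lemma fine_division1_singleton:
  assumes "is_cell1 c" "assoc1 y c" "fine1 \<delta> y c"
  shows "fine_division1 \<delta> (cell1_set c) {(y, c)}"
  using assms unfolding fine_division1_def disjoint_family_on_def by simp

lemma fine_division1_Un:
  assumes Q: "fine_division1 \<delta> X Q" and Q': "fine_division1 \<delta> X' Q'" and "X \<inter> X' = {}"
  shows "fine_division1 \<delta> (X \<union> X') (Q \<union> Q')"
proof -
  have "cell1_set (snd p) \<subseteq> X" if "p \<in> Q" for p
    using Q that unfolding fine_division1_def by blast
  moreover have "cell1_set (snd p) \<subseteq> X'" if "p \<in> Q'" for p
    using Q' that unfolding fine_division1_def by blast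
  ultimately have "disjoint_family_on (\<lambda>p. cell1_set (snd p)) (Q \<union> Q')"
    unfolding disjoint_family_on_def
    using fine_division1_unique_cell[OF Q] fine_division1_unique_cell[OF Q'] \<open>X \<inter> X' = {}\<close>
    by blast
  with Q Q' show ?thesis
    unfolding fine_division1_def by blast
qed

lemma fine_division1_Ioc_join:
  assumes "fine_division1 \<delta> {a<..c} Q" "fine_division1 \<delta> {c<..b} Q'" "a \<le> c" "c \<le> b"
  shows "fine_division1 \<delta> {a<..b} (Q \<union> Q')"
proof -
  have "fine_division1 \<delta> ({a<..c} \<union> {c<..b}) (Q \<union> Q')"
    using assms(1,2) by (rule fine_division1_Un) auto
  with assms(3,4) show ?thesis
    by (simp add: ivl_disj_un_two(6))
qed

lemma fine_division1_Ioc_extend: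
  assumes "fine_division1 \<delta> {a<..c} Q" "a \<le> c" "c < d" "d - c < \<delta> y"
    and "y = ereal c \<or> y = ereal d"
  shows "fine_division1 \<delta> {a<..d} (Q \<union> {(y, (ereal c, ereal d))})"
proof -
  have "fine_division1 \<delta> {c<..d} {(y, (ereal c, ereal d))}"
    using fine_division1_singleton[of "(ereal c, ereal d)" y \<delta>] assms(3-5)
    by (auto simp: is_cell1_def assoc1_def fine1_def)
  with assms(1-3) show ?thesis
    using fine_division1_Ioc_join by fastforce
qed

text \<open>The supremum s of the points c for which ]a,c] has a fine division is
  attained, via a cell ]c,s] tagged at s, and s < b is impossible, because the gauge at s
  allows a further cell ]s,d] tagged at s.\<close>

lemma fine_division1_Ioc:
  assumes pos: "\<And>y. \<delta> y > 0" and "a \<le> b"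
  shows "\<exists>Q. fine_division1 \<delta> {a<..b} Q"
proof -
  define C where "C = {c. a \<le> c \<and> c \<le> b \<and> (\<exists>Q. fine_division1 \<delta> {a<..c} Q)}"
  define s where "s = Sup C"
  have "a \<in> C"
    using \<open>a \<le> b\<close> by (auto simp: C_def fine_division1_def disjoint_family_on_def intro!: exI[of _ "{}"])
  then have "C \<noteq> {}"
    by blast
  have bdd: "bdd_above C"
    unfolding C_def by (auto intro: bdd_aboveI[of _ b])
  then have upper: "\<And>c. c \<in> C \<Longrightarrow> c \<le> s"
    unfolding s_def by (simp add: cSup_upper)
  have "a \<le> s"
    using upper[OF \<open>a \<in> C\<close>] .
  have "s \<le> b"
    unfolding s_def using \<open>C \<noteq> {}\<close> by (rule cSup_least) (simp add: C_def)
  have "s \<in> C"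
  proof -
    have "s - \<delta> (ereal s) < Sup C"
      using pos[of "ereal s"] unfolding s_def by simp
    then obtain c where c: "c \<in> C" "s - \<delta> (ereal s) < c"
      using less_cSup_iff[OF \<open>C \<noteq> {}\<close> bdd] by blast
    then obtain Q where Q: "fine_division1 \<delta> {a<..c} Q" "a \<le> c"
      unfolding C_def by blast
    show ?thesis
    proof (cases "c = s")
      case False
      with upper[OF c(1)] have "c < s"
        by simp
      with Q c(2) have "fine_division1 \<delta> {a<..s} (Q \<union> {(ereal s, (ereal c, ereal s))})"
        by (intro fine_division1_Ioc_extend) auto
      with \<open>a \<le> s\<close> \<open>s \<le> b\<close> show ?thesis
        unfolding C_def by blast
    qed (use c in simp)
  qed
  moreover have "\<not> s < b"
  proof
    assume "s < b"
    define d where "d = min b (s + \<delta> (ereal s) / 2)"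
    have "s < d" "d \<le> b" "d - s < \<delta> (ereal s)"
      using \<open>s < b\<close> pos[of "ereal s"] unfolding d_def by auto
    from \<open>s \<in> C\<close> obtain Q where "fine_division1 \<delta> {a<..s} Q"
      unfolding C_def by blast
    with \<open>a \<le> s\<close> \<open>s < d\<close> \<open>d - s < \<delta> (ereal s)\<close>
    have "fine_division1 \<delta> {a<..d} (Q \<union> {(ereal s, (ereal s, ereal d))})"
      by (intro fine_division1_Ioc_extend) auto
    with \<open>a \<le> s\<close> \<open>s < d\<close> \<open>d \<le> b\<close> have "d \<in> C"
      unfolding C_def by auto
    with upper \<open>s < d\<close> show False
      by fastforce
  qed
  ultimately show ?thesis
    using \<open>s \<le> b\<close> unfolding C_def by auto
qed

lemma fine_division1_UNIV:
  assumes pos: "\<And>y. \<delta> y > 0"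
  shows "\<exists>Q. fine_division1 \<delta> UNIV Q"
proof -
  define a where "a = - 1 / \<delta> (-\<infinity>) - 1"
  define b where "b = 1 / \<delta> \<infinity> + 1"
  have "1 / \<delta> (-\<infinity>) > 0" "1 / \<delta> \<infinity> > 0"
    using pos[of "-\<infinity>"] pos[of \<infinity>] by simp_all
  then have "a \<le> b"
    unfolding a_def b_def by linarith
  then obtain Q where "fine_division1 \<delta> {a<..b} Q"
    using fine_division1_Ioc[of \<delta>] pos by blast
  moreover have "fine_division1 \<delta> {..a} {(-\<infinity>, (-\<infinity>, ereal a))}"
    using fine_division1_singleton[of "(-\<infinity>, ereal a)" "-\<infinity>" \<delta>]
    by (simp add: is_cell1_def assoc1_def fine1_def a_def)
  ultimately have "fine_division1 \<delta> {..b} ({(-\<infinity>, (-\<infinity>, ereal a))} \<union> Q)"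
    using fine_division1_Un ivl_disj_un_one(3)[OF \<open>a \<le> b\<close>] by fastforce
  moreover have "fine_division1 \<delta> {b<..} {(\<infinity>, (ereal b, \<infinity>))}"
    using fine_division1_singleton[of "(ereal b, \<infinity>)" \<infinity> \<delta>]
    by (simp add: is_cell1_def assoc1_def fine1_def b_def)
  ultimately have "fine_division1 \<delta> ({..b} \<union> {b<..}) ({(-\<infinity>, (-\<infinity>, ereal a))} \<union> Q \<union> {(\<infinity>, (ereal b, \<infinity>))})"
    by (rule fine_division1_Un) auto
  also have "{..b} \<union> {b<..} = UNIV"
    by auto
  finally show ?thesis
    by blast
qed

section \<open>Fine cylinder partitions of a product of finite sets\<close>

definition extensions :: "'i set \<Rightarrow> ('i \<Rightarrow> 'v set) \<Rightarrow> ('i \<times> 'v) set \<Rightarrow> ('i \<Rightarrow> 'v) set" where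
  "extensions S P g = {\<omega> \<in> Pi S P. \<forall>(s, v)\<in>g. \<omega> s = v}"

definition cylinder :: "'i set \<Rightarrow> ('i \<Rightarrow> 'v set) \<Rightarrow> 'i set \<Rightarrow> ('i \<Rightarrow> 'v) \<Rightarrow> ('i \<Rightarrow> 'v) set" where
  "cylinder S P G w = {\<omega> \<in> Pi S P. \<forall>s\<in>G. \<omega> s = w s}"

lemma extensions_at: "\<omega> \<in> extensions S P g \<Longrightarrow> (s, v) \<in> g \<Longrightarrow> \<omega> s = v"
  unfolding extensions_def by fast

lemma extensions_empty [simp]: "extensions S P {} = Pi S P"
  by (simp add: extensions_def)

lemma extensions_insert: "extensions S P (insert (t, p) g) = {\<omega> \<in> extensions S P g. \<omega> t = p}"
  by (auto simp: extensions_def)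

lemma extensions_antimono: "g \<subseteq> g' \<Longrightarrow> extensions S P g' \<subseteq> extensions S P g"
  by (auto simp: extensions_def)

lemma cylinder_insert: "cylinder S P (insert t G) w = {\<omega> \<in> cylinder S P G w. \<omega> t = w t}"
  by (auto simp: cylinder_def)

text \<open>A partial assignment g (a relation between coordinates and values) fixes a face
  of the product; F partitions that face into cylinders, each tagged by a point w of the face
  whose cylinder fixes, outside the domain of g, all coordinates in \<Lambda> w.\<close>

definition fine_cylinder_partition ::
    "'i set \<Rightarrow> ('i \<Rightarrow> 'v set) \<Rightarrow> (('i \<Rightarrow> 'v) \<Rightarrow> 'i set) \<Rightarrow> ('i \<times> 'v) set
      \<Rightarrow> ('i set \<times> ('i \<Rightarrow> 'v)) set \<Rightarrow> bool" where
  "fine_cylinder_partition S P \<Lambda> g F \<longleftrightarrow> finite F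
     \<and> (\<forall>(G, w)\<in>F. finite G \<and> G \<subseteq> S \<and> w \<in> extensions S P g \<and> \<Lambda> w \<subseteq> G \<union> Domain g)
     \<and> disjoint_family_on (\<lambda>p. cylinder S P (fst p) (snd p) \<inter> extensions S P g) F
     \<and> extensions S P g \<subseteq> (\<Union>(G, w)\<in>F. cylinder S P G w)"

definition partitionable :: "'i set \<Rightarrow> ('i \<Rightarrow> 'v set) \<Rightarrow> (('i \<Rightarrow> 'v) \<Rightarrow> 'i set) \<Rightarrow> ('i \<times> 'v) set \<Rightarrow> bool" where
  "partitionable S P \<Lambda> g \<longleftrightarrow> (\<exists>F. fine_cylinder_partition S P \<Lambda> g F)"

lemma fine_cylinder_partition_memD:
  assumes "fine_cylinder_partition S P \<Lambda> g F" "(G, w) \<in> F"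
  shows "finite G" "G \<subseteq> S" "w \<in> extensions S P g" "\<Lambda> w \<subseteq> G \<union> Domain g"
  using assms unfolding fine_cylinder_partition_def by auto

lemma partitionable_if_extensions_empty: "extensions S P g = {} \<Longrightarrow> partitionable S P \<Lambda> g"
  unfolding partitionable_def fine_cylinder_partition_def disjoint_family_on_def
  by (intro exI[of _ "{}"]) auto

lemma partitionable_if_total:
  assumes "S \<subseteq> Domain g" and "\<And>\<omega>. \<omega> \<in> Pi S P \<Longrightarrow> \<Lambda> \<omega> \<subseteq> S"
  shows "partitionable S P \<Lambda> g"
proof (cases "extensions S P g = {}")
  case False
  then obtain \<omega> where "\<omega> \<in> extensions S P g"
    by blast
  with assms have "fine_cylinder_partition S P \<Lambda> g {({}, \<omega>)}"
    by (auto simp: fine_cylinder_partition_def disjoint_family_on_def extensions_def cylinder_def)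
  then show ?thesis
    unfolding partitionable_def by blast
qed (rule partitionable_if_extensions_empty)

lemma cylinder_insert_Int_extensions:
  "w t = p \<Longrightarrow> cylinder S P (insert t G) w \<inter> extensions S P g
    = cylinder S P G w \<inter> extensions S P (insert (t, p) g)"
  by (auto simp: cylinder_insert extensions_insert)

lemma partitionable_insert:
  assumes t: "t \<in> S" "t \<notin> Domain g" "finite (P t)"
    and parts: "\<And>p. p \<in> P t \<Longrightarrow> partitionable S P \<Lambda> (insert (t, p) g)"
  shows "partitionable S P \<Lambda> g"
proof -
  have "\<forall>p\<in>P t. \<exists>F. fine_cylinder_partition S P \<Lambda> (insert (t, p) g) F"
    using parts unfolding partitionable_def by blast
  from this[THEN bchoice] obtain F
    where F: "\<And>p. p \<in> P t \<Longrightarrow> fine_cylinder_partition S P \<Lambda> (insert (t, p) g) (F p)"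
    by blast
  define F' where "F' = (\<Union>p\<in>P t. (\<lambda>(G, w). (insert t G, w)) ` F p)"
  define piece where "piece q = cylinder S P (fst q) (snd q) \<inter> extensions S P g" for q
  have tag: "finite G" "G \<subseteq> S" "w \<in> extensions S P g" "w t = p" "\<Lambda> w \<subseteq> insert t G \<union> Domain g"
    if "p \<in> P t" "(G, w) \<in> F p" for p G w
    using fine_cylinder_partition_memD[OF F[OF that(1)] that(2)] unfolding extensions_insert by auto
  have piece: "piece (insert t G, w) = cylinder S P G w \<inter> extensions S P (insert (t, p) g)"
    if "p \<in> P t" "(G, w) \<in> F p" for p G w
    unfolding piece_def using cylinder_insert_Int_extensions[of w t p, OF tag(4)[OF that]] by simp
  have "fine_cylinder_partition S P \<Lambda> g F'"
    unfolding fine_cylinder_partition_def piece_def[symmetric]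
  proof (intro conjI)
    show "finite F'"
      using F t(3) unfolding F'_def fine_cylinder_partition_def by auto
    have "finite (insert t G) \<and> insert t G \<subseteq> S \<and> w \<in> extensions S P g
        \<and> \<Lambda> w \<subseteq> insert t G \<union> Domain g" if "p \<in> P t" "(G, w) \<in> F p" for p G w
      using tag[OF that] t(1) by blast
    then show "\<forall>(G, w)\<in>F'. finite G \<and> G \<subseteq> S \<and> w \<in> extensions S P g \<and> \<Lambda> w \<subseteq> G \<union> Domain g"
      unfolding F'_def by fastforce
    show "disjoint_family_on piece F'"
    proof (unfold disjoint_family_on_def, intro ballI impI)
      fix q q' assume "q \<in> F'" "q' \<in> F'" "q \<noteq> q'"
      from \<open>q \<in> F'\<close> obtain p G w where p: "p \<in> P t" "(G, w) \<in> F p" "q = (insert t G, w)"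
        unfolding F'_def by auto
      from \<open>q' \<in> F'\<close> obtain p' G' w' where p': "p' \<in> P t" "(G', w') \<in> F p'" "q' = (insert t G', w')"
        unfolding F'_def by auto
      show "piece q \<inter> piece q' = {}"
      proof (cases "p = p'")
        case True
        with p p' \<open>q \<noteq> q'\<close> have G'w': "(G', w') \<in> F p" and "(G, w) \<noteq> (G', w')"
          by auto
        have "disjoint_family_on
            (\<lambda>q. cylinder S P (fst q) (snd q) \<inter> extensions S P (insert (t, p) g)) (F p)"
          using F[OF p(1)] unfolding fine_cylinder_partition_def by blast
        from disjoint_family_onD[OF this p(2) G'w' \<open>(G, w) \<noteq> (G', w')\<close>] show ?thesis
          unfolding p(3) p'(3) piece[OF p(1,2)] piece[OF p(1) G'w'] by simp
      next
        case False
        then show ?thesis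
          unfolding p(3) p'(3) piece[OF p(1,2)] piece[OF p'(1,2)] by (auto simp: extensions_insert)
      qed
    qed
    show "extensions S P g \<subseteq> (\<Union>(G, w)\<in>F'. cylinder S P G w)"
    proof
      fix \<omega> assume \<omega>: "\<omega> \<in> extensions S P g"
      then have "\<omega> t \<in> P t" "\<omega> \<in> extensions S P (insert (t, \<omega> t) g)"
        using t(1) by (auto simp: extensions_def)
      with F[OF \<open>\<omega> t \<in> P t\<close>] obtain G w where Gw: "(G, w) \<in> F (\<omega> t)"
        and "\<omega> \<in> cylinder S P G w \<inter> extensions S P (insert (t, \<omega> t) g)"
        unfolding fine_cylinder_partition_def by blast
      then have "\<omega> \<in> cylinder S P (insert t G) w"
        using piece[OF \<open>\<omega> t \<in> P t\<close> Gw] \<omega> unfolding piece_def by auto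
      moreover have "(insert t G, w) \<in> F'"
        using \<open>\<omega> t \<in> P t\<close> Gw unfolding F'_def by force
      ultimately show "\<omega> \<in> (\<Union>(G, w)\<in>F'. cylinder S P G w)"
        by blast
    qed
  qed
  then show ?thesis
    unfolding partitionable_def by blast
qed

lemma extensions_Union_chain_nonempty:
  assumes "chain\<^sub>\<subseteq> C" "C \<noteq> {}" and nonempty: "\<And>g. g \<in> C \<Longrightarrow> extensions S P g \<noteq> {}"
  shows "extensions S P (\<Union>C) \<noteq> {}"
proof -
  have consistent: "v' = v \<and> (s \<in> S \<longrightarrow> v \<in> P s)" if "(s, v) \<in> \<Union>C" "(s, v') \<in> \<Union>C" for s v v'
  proof -
    from that obtain g g' where "g \<in> C" "(s, v) \<in> g" "g' \<in> C" "(s, v') \<in> g'"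
      by blast
    moreover from calculation have "g \<subseteq> g' \<or> g' \<subseteq> g"
      using assms(1) unfolding chain_subset_def by blast
    ultimately obtain h where "h \<in> C" "(s, v) \<in> h" "(s, v') \<in> h"
      by blast
    moreover obtain \<omega> where "\<omega> \<in> extensions S P h"
      using nonempty[OF \<open>h \<in> C\<close>] by blast
    ultimately have "\<omega> s = v" "\<omega> s = v'" "\<omega> \<in> Pi S P"
      using extensions_at[of \<omega> S P h] unfolding extensions_def by blast+
    then show ?thesis
      by auto
  qed
  from assms(2) obtain g where "g \<in> C"
    by blast
  with nonempty obtain \<omega>\<^sub>0 where "\<omega>\<^sub>0 \<in> extensions S P g"
    by blast
  then have "\<omega>\<^sub>0 \<in> Pi S P"
    by (simp add: extensions_def)
  define \<omega> where "\<omega> s = (if s \<in> Domain (\<Union>C) then THE v. (s, v) \<in> \<Union>C else \<omega>\<^sub>0 s)" for s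
  have \<omega>_eq: "\<omega> s = v" if "(s, v) \<in> \<Union>C" for s v
  proof -
    have "(THE v. (s, v) \<in> \<Union>C) = v"
      by (rule the_equality) (use that consistent in blast)+
    with that show ?thesis
      unfolding \<omega>_def by auto
  qed
  have "\<omega> s \<in> P s" if "s \<in> S" for s
  proof (cases "s \<in> Domain (\<Union>C)")
    case True
    then obtain v where "(s, v) \<in> \<Union>C"
      by blast
    with that show ?thesis
      using consistent \<omega>_eq by blast
  qed (use that \<open>\<omega>\<^sub>0 \<in> Pi S P\<close> in \<open>auto simp: \<omega>_def\<close>)
  with \<omega>_eq show ?thesis
    unfolding extensions_def by blast
qed

lemma extensions_patch:
  assumes "\<omega> \<in> extensions S P g" "\<omega>\<^sub>0 \<in> extensions S P U" "g \<subseteq> U" "E \<inter> Domain U \<subseteq> Domain g"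
  shows "(\<lambda>s. if s \<in> E then \<omega> s else \<omega>\<^sub>0 s) \<in> extensions S P U"
proof -
  have "(if s \<in> E then \<omega> s else \<omega>\<^sub>0 s) = v" if "(s, v) \<in> U" for s v
  proof (cases "s \<in> E")
    case True
    with assms(4) that obtain v' where "(s, v') \<in> g"
      by blast
    with assms(1-3) that True show ?thesis
      using extensions_at[of \<omega>] extensions_at[of \<omega>\<^sub>0] by (metis subsetD)
  qed (use assms(2) that extensions_at in auto)
  moreover have "(\<lambda>s. if s \<in> E then \<omega> s else \<omega>\<^sub>0 s) \<in> Pi S P"
    using assms(1,2) unfolding extensions_def by auto
  ultimately show ?thesis
    unfolding extensions_def by blast
qed

text \<open>F only inspects the finitely many coordinates in E, so an extension of g can be
  patched off E into an extension of U without entering or leaving any cylinder of F.\<close>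

lemma fine_cylinder_partition_shrink:
  assumes F: "fine_cylinder_partition S P \<Lambda> U F"
    and "extensions S P U \<noteq> {}" "g \<subseteq> U"
    and E: "(\<Union>(G, w)\<in>F. G \<union> \<Lambda> w) \<inter> Domain U \<subseteq> Domain g"
  shows "fine_cylinder_partition S P \<Lambda> g F"
proof -
  define E where "E = (\<Union>(G, w)\<in>F. G \<union> \<Lambda> w)"
  obtain \<omega>\<^sub>0 where \<omega>\<^sub>0: "\<omega>\<^sub>0 \<in> extensions S P U"
    using assms(2) by blast
  define patch where "patch \<omega> = (\<lambda>s. if s \<in> E then \<omega> s else \<omega>\<^sub>0 s)" for \<omega>
  have patch: "patch \<omega> \<in> extensions S P U" if "\<omega> \<in> extensions S P g" for \<omega>
    unfolding patch_def using extensions_patch[OF that \<omega>\<^sub>0 \<open>g \<subseteq> U\<close>] E unfolding E_def by blast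
  have patch_cylinder: "patch \<omega> \<in> cylinder S P G w \<longleftrightarrow> \<omega> \<in> cylinder S P G w"
    if "(G, w) \<in> F" "\<omega> \<in> extensions S P g" for G w \<omega>
  proof -
    have "G \<subseteq> E"
      using that(1) unfolding E_def by blast
    then show ?thesis
      using that(2) patch[OF that(2)] unfolding patch_def cylinder_def extensions_def by auto
  qed
  show ?thesis
    unfolding fine_cylinder_partition_def
  proof (intro conjI)
    show "finite F"
      using F by (simp add: fine_cylinder_partition_def)
    have "w \<in> extensions S P g \<and> \<Lambda> w \<subseteq> G \<union> Domain g" if "(G, w) \<in> F" for G w
      using fine_cylinder_partition_memD[OF F that] extensions_antimono[OF \<open>g \<subseteq> U\<close>] E that
      by blast
    then show "\<forall>(G, w)\<in>F. finite G \<and> G \<subseteq> S \<and> w \<in> extensions S P g \<and> \<Lambda> w \<subseteq> G \<union> Domain g"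
      using fine_cylinder_partition_memD[OF F] by blast
    show "disjoint_family_on (\<lambda>p. cylinder S P (fst p) (snd p) \<inter> extensions S P g) F"
    proof (unfold disjoint_family_on_def, intro ballI impI equals0I)
      fix p q \<omega>
      assume "p \<in> F" "q \<in> F" "p \<noteq> q"
        and \<omega>: "\<omega> \<in> (cylinder S P (fst p) (snd p) \<inter> extensions S P g) \<inter>
                  (cylinder S P (fst q) (snd q) \<inter> extensions S P g)"
      then have "patch \<omega> \<in> (cylinder S P (fst p) (snd p) \<inter> extensions S P U) \<inter>
                  (cylinder S P (fst q) (snd q) \<inter> extensions S P U)"
        using patch_cylinder[of "fst p" "snd p" \<omega>] patch_cylinder[of "fst q" "snd q" \<omega>]
          patch[of \<omega>] by simp
      moreover have "disjoint_family_on (\<lambda>p. cylinder S P (fst p) (snd p) \<inter> extensions S P U) F"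
        using F unfolding fine_cylinder_partition_def by blast
      ultimately show False
        using disjoint_family_onD \<open>p \<in> F\<close> \<open>q \<in> F\<close> \<open>p \<noteq> q\<close> by fastforce
    qed
    show "extensions S P g \<subseteq> (\<Union>(G, w)\<in>F. cylinder S P G w)"
    proof
      fix \<omega> assume \<omega>: "\<omega> \<in> extensions S P g"
      have "extensions S P U \<subseteq> (\<Union>(G, w)\<in>F. cylinder S P G w)"
        using F unfolding fine_cylinder_partition_def by blast
      with patch[OF \<omega>] obtain G w where "(G, w) \<in> F" "patch \<omega> \<in> cylinder S P G w"
        by blast
      with patch_cylinder \<omega> show "\<omega> \<in> (\<Union>(G, w)\<in>F. cylinder S P G w)"
        by blast
    qed
  qed
qed

lemma partitionable_chain:
  assumes fin: "\<And>\<omega>. \<omega> \<in> Pi S P \<Longrightarrow> finite (\<Lambda> \<omega>)"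
    and C: "chain\<^sub>\<subseteq> C" "C \<noteq> {}" and "partitionable S P \<Lambda> (\<Union>C)"
  shows "\<exists>g\<in>C. partitionable S P \<Lambda> g"
proof (cases "\<exists>g\<in>C. extensions S P g = {}")
  case True
  then show ?thesis
    using partitionable_if_extensions_empty by blast
next
  case False
  then have nonempty: "extensions S P (\<Union>C) \<noteq> {}"
    using extensions_Union_chain_nonempty[OF C] by blast
  obtain F where F: "fine_cylinder_partition S P \<Lambda> (\<Union>C) F"
    using \<open>partitionable S P \<Lambda> (\<Union>C)\<close> unfolding partitionable_def by blast
  define E where "E = (\<Union>(G, w)\<in>F. G \<union> \<Lambda> w)"
  have "finite (G \<union> \<Lambda> w)" if "(G, w) \<in> F" for G w
    using fine_cylinder_partition_memD[OF F that] fin unfolding extensions_def by blast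
  with F have "finite E"
    unfolding E_def fine_cylinder_partition_def by (auto intro!: finite_UN_I)
  then have "finite (E \<inter> Domain (\<Union>C))"
    by simp
  moreover have "E \<inter> Domain (\<Union>C) \<subseteq> \<Union>(Domain ` C)"
    by auto
  moreover have "Domain ` C \<noteq> {}"
    using C(2) by blast
  moreover have "subset.chain UNIV (Domain ` C)"
    using C(1) unfolding chain_subset_alt_def[symmetric] chain_subset_def by (blast dest: Domain_mono)
  ultimately obtain D where "D \<in> Domain ` C" "E \<inter> Domain (\<Union>C) \<subseteq> D"
    by (rule finite_subset_Union_chain)
  then obtain g where "g \<in> C" "E \<inter> Domain (\<Union>C) \<subseteq> Domain g"
    by blast
  then have "fine_cylinder_partition S P \<Lambda> g F"
    using fine_cylinder_partition_shrink[OF F nonempty] unfolding E_def by blast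
  with \<open>g \<in> C\<close> show ?thesis
    unfolding partitionable_def by blast
qed

text \<open>A maximal non-partitionable partial assignment is impossible: if it is total it is
  trivially partitionable, and otherwise it can be extended at a new coordinate in each of the
  finitely many possible ways, all of which are partitionable by maximality.\<close>

lemma fine_cylinder_partition_exists:
  assumes fin: "\<And>s. s \<in> S \<Longrightarrow> finite (P s)"
    and \<Lambda>: "\<And>\<omega>. \<omega> \<in> Pi S P \<Longrightarrow> finite (\<Lambda> \<omega>) \<and> \<Lambda> \<omega> \<subseteq> S"
  shows "\<exists>F. fine_cylinder_partition S P \<Lambda> {} F"
  unfolding partitionable_def[symmetric]
proof (rule ccontr)
  assume "\<not> partitionable S P \<Lambda> {}"
  define A where "A = {g. \<not> partitionable S P \<Lambda> g}"
  have "\<forall>C\<in>chains A. \<exists>U\<in>A. \<forall>g\<in>C. g \<subseteq> U"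
  proof
    fix C assume "C \<in> chains A"
    show "\<exists>U\<in>A. \<forall>g\<in>C. g \<subseteq> U"
    proof (cases "C = {}")
      case True
      with \<open>\<not> partitionable S P \<Lambda> {}\<close> show ?thesis
        unfolding A_def by blast
    next
      case False
      have "chain\<^sub>\<subseteq> C" "C \<subseteq> A"
        using \<open>C \<in> chains A\<close> unfolding chains_def by blast+
      with False \<Lambda> have "\<not> partitionable S P \<Lambda> (\<Union>C)"
        using partitionable_chain[of S P \<Lambda> C] unfolding A_def by blast
      then show ?thesis
        unfolding A_def by blast
    qed
  qed
  from Zorn_Lemma2[OF this] obtain M where "M \<in> A" and maximal: "\<forall>g\<in>A. M \<subseteq> g \<longrightarrow> g = M"
    by blast
  then have "\<not> partitionable S P \<Lambda> M"
    by (simp add: A_def)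
  moreover have "partitionable S P \<Lambda> M"
  proof (cases "S \<subseteq> Domain M")
    case True
    with \<Lambda> show ?thesis
      using partitionable_if_total[of S M P \<Lambda>] by simp
  next
    case False
    then obtain t where "t \<in> S" "t \<notin> Domain M"
      by blast
    moreover have "partitionable S P \<Lambda> (insert (t, p) M)" for p
    proof (rule ccontr)
      assume "\<not> partitionable S P \<Lambda> (insert (t, p) M)"
      with maximal have "insert (t, p) M = M"
        unfolding A_def by blast
      with \<open>t \<notin> Domain M\<close> show False
        by blast
    qed
    ultimately show ?thesis
      using partitionable_insert[of t S M P \<Lambda>] fin by blast
  qed
  ultimately show False
    by contradiction
qed

section \<open>Fine divisions of R_{T.3}\<close>

definition tag_of :: "'a set \<Rightarrow> (nat \<times> 'a \<Rightarrow> ereal \<times> cell1) \<Rightarrow> nat \<Rightarrow> 'a \<Rightarrow> ereal" where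
  "tag_of T w = (\<lambda>j\<in>J3. \<lambda>t\<in>T. fst (w (j, t)))"

definition cell_of :: "(nat \<times> 'a) set \<Rightarrow> (nat \<times> 'a \<Rightarrow> ereal \<times> cell1) \<Rightarrow> 'a cell3" where
  "cell_of G w = ((\<lambda>j. {t. (j, t) \<in> G}), (\<lambda>j t. snd (w (j, t))))"

definition required_coordinates ::
    "(nat \<Rightarrow> ('a \<Rightarrow> ereal) \<Rightarrow> 'a set) \<Rightarrow> 'a set \<Rightarrow> (nat \<times> 'a \<Rightarrow> ereal \<times> cell1) \<Rightarrow> (nat \<times> 'a) set" where
  "required_coordinates L T w = {(j, t). j \<in> J3 \<and> t \<in> L j (tag_of T w j)}"

definition locate :: "(nat \<Rightarrow> 'a \<Rightarrow> (ereal \<times> cell1) set) \<Rightarrow> (nat \<Rightarrow> 'a \<Rightarrow> real) \<Rightarrow> nat \<times> 'a \<Rightarrow> ereal \<times> cell1" where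
  "locate Q X = (\<lambda>(j, t). SOME q. q \<in> Q j t \<and> X j t \<in> cell1_set (snd q))"

lemma fine_division1_memD:
  assumes "fine_division1 \<delta> X Q" "q \<in> Q"
  shows "is_cell1 (snd q)" "assoc1 (fst q) (snd q)" "fine1 \<delta> (fst q) (snd q)"
  using assms unfolding fine_division1_def by auto

lemma locate_eq_iff:
  assumes Q: "fine_division1 \<delta> UNIV (Q j t)" and "q \<in> Q j t"
  shows "locate Q X (j, t) = q \<longleftrightarrow> X j t \<in> cell1_set (snd q)"
proof -
  have "\<exists>q. q \<in> Q j t \<and> X j t \<in> cell1_set (snd q)"
    using Q unfolding fine_division1_def by blast
  then have "locate Q X (j, t) \<in> Q j t" "X j t \<in> cell1_set (snd (locate Q X (j, t)))"
    unfolding locate_def by (metis (mono_tags, lifting) case_prod_conv someI_ex)+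
  then show ?thesis
    using fine_division1_unique_cell[OF Q] \<open>q \<in> Q j t\<close> by blast
qed

lemma required_coordinates_finite_subset:
  assumes "\<forall>j\<in>J3. \<forall>x\<in>T \<rightarrow>\<^sub>E UNIV. finite (L j x) \<and> L j x \<subseteq> T"
  shows "finite (required_coordinates L T w) \<and> required_coordinates L T w \<subseteq> J3 \<times> T"
proof -
  have "tag_of T w j \<in> T \<rightarrow>\<^sub>E UNIV" if "j \<in> J3" for j
    using that unfolding tag_of_def by auto
  then have "finite (L j (tag_of T w j)) \<and> L j (tag_of T w j) \<subseteq> T" if "j \<in> J3" for j
    using assms that by blast
  moreover have "required_coordinates L T w = (\<Union>j\<in>J3. {j} \<times> L j (tag_of T w j))"
    unfolding required_coordinates_def by auto
  ultimately show ?thesis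
    by auto
qed

locale coordinate_divisions =
  fixes T :: "'a set" and \<delta> :: "nat \<Rightarrow> 'a \<Rightarrow> ereal \<Rightarrow> real"
    and Q :: "nat \<Rightarrow> 'a \<Rightarrow> (ereal \<times> cell1) set"
  assumes fine_division: "\<And>j t. j \<in> J3 \<Longrightarrow> t \<in> T \<Longrightarrow> fine_division1 (\<delta> j t) UNIV (Q j t)"
begin

lemma locate_in_Pi: "locate Q X \<in> Pi (J3 \<times> T) (case_prod Q)"
proof -
  have "locate Q X (j, t) \<in> Q j t" if jt: "j \<in> J3" "t \<in> T" for j t
  proof -
    obtain q where "q \<in> Q j t" "X j t \<in> cell1_set (snd q)"
      using fine_division[OF jt] unfolding fine_division1_def by blast
    with locate_eq_iff[of "\<delta> j t" Q j t, OF fine_division[OF jt]] show ?thesis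
      by metis
  qed
  then show ?thesis
    by auto
qed

lemma mem_cell_of_iff:
  assumes "G \<subseteq> J3 \<times> T" "w \<in> Pi (J3 \<times> T) (case_prod Q)" "X \<in> space3 T"
  shows "X \<in> cell3_set T (cell_of G w) \<longleftrightarrow> locate Q X \<in> cylinder (J3 \<times> T) (case_prod Q) G w"
proof -
  have "X \<in> cell3_set T (cell_of G w) \<longleftrightarrow> (\<forall>(j, t)\<in>G. X j t \<in> cell1_set (snd (w (j, t))))"
    using \<open>G \<subseteq> J3 \<times> T\<close> \<open>X \<in> space3 T\<close> unfolding cell3_set_def cell_of_def by auto
  also have "\<dots> \<longleftrightarrow> (\<forall>(j, t)\<in>G. locate Q X (j, t) = w (j, t))"
  proof -
    have "locate Q X (j, t) = w (j, t) \<longleftrightarrow> X j t \<in> cell1_set (snd (w (j, t)))" if "(j, t) \<in> G" for j t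
      using that \<open>G \<subseteq> J3 \<times> T\<close> \<open>w \<in> Pi (J3 \<times> T) (case_prod Q)\<close>
      by (intro locate_eq_iff[of "\<delta> j t" Q j t] fine_division) auto
    then show ?thesis
      by auto
  qed
  also have "\<dots> \<longleftrightarrow> locate Q X \<in> cylinder (J3 \<times> T) (case_prod Q) G w"
    using locate_in_Pi unfolding cylinder_def by auto
  finally show ?thesis .
qed

lemma gamma_fine_tagged_cell_of:
  assumes G: "finite G" "G \<subseteq> J3 \<times> T" and w: "w \<in> Pi (J3 \<times> T) (case_prod Q)"
    and "required_coordinates L T w \<subseteq> G"
  shows "tag_of T w \<in> tags3 T \<and> is_cell3 T (cell_of G w) \<and> assoc3 (tag_of T w) (cell_of G w)
    \<and> gamma_fine L \<delta> (tag_of T w) (cell_of G w)"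
proof -
  have pair: "is_cell1 (snd (w (j, t))) \<and> assoc1 (tag_of T w j t) (snd (w (j, t)))
      \<and> fine1 (\<delta> j t) (tag_of T w j t) (snd (w (j, t)))" if "(j, t) \<in> G" for j t
  proof -
    have jt: "j \<in> J3" "t \<in> T" and "w (j, t) \<in> Q j t"
      using that G w by auto
    then show ?thesis
      using fine_division1_memD[OF fine_division[OF jt]] unfolding tag_of_def by simp
  qed
  have "finite {t. (j, t) \<in> G}" for j
    using finite_imageI[OF \<open>finite G\<close>, of snd] by (rule finite_subset[rotated]) force
  with G pair have "is_cell3 T (cell_of G w)"
    unfolding is_cell3_def cell_of_def by auto
  moreover have "L j (tag_of T w j) \<subseteq> {t. (j, t) \<in> G}" if "j \<in> J3" for j
    using \<open>required_coordinates L T w \<subseteq> G\<close> that unfolding required_coordinates_def by auto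
  with pair have "gamma_fine L \<delta> (tag_of T w) (cell_of G w)"
    unfolding gamma_fine_def cell_of_def by simp
  moreover have "tag_of T w \<in> tags3 T"
    unfolding tags3_def tag_of_def by auto
  moreover have "assoc3 (tag_of T w) (cell_of G w)"
    using pair unfolding assoc3_def cell_of_def by simp
  ultimately show ?thesis
    by blast
qed

lemma cell_of_disjoint:
  assumes F: "fine_cylinder_partition (J3 \<times> T) (case_prod Q) \<Lambda> {} F"
    and "(G, w) \<in> F" "(G', w') \<in> F" "(G, w) \<noteq> (G', w')"
  shows "cell3_set T (cell_of G w) \<inter> cell3_set T (cell_of G' w') = {}"
proof (rule equals0I)
  let ?cyl = "cylinder (J3 \<times> T) (case_prod Q)"
  fix X assume X: "X \<in> cell3_set T (cell_of G w) \<inter> cell3_set T (cell_of G' w')"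
  then have "X \<in> space3 T"
    unfolding cell3_set_def by blast
  with X have "locate Q X \<in> (?cyl G w \<inter> Pi (J3 \<times> T) (case_prod Q)) \<inter> (?cyl G' w' \<inter> Pi (J3 \<times> T) (case_prod Q))"
    using mem_cell_of_iff fine_cylinder_partition_memD[OF F assms(2)]
      fine_cylinder_partition_memD[OF F assms(3)] locate_in_Pi by simp
  moreover have "disjoint_family_on (\<lambda>p. ?cyl (fst p) (snd p) \<inter> Pi (J3 \<times> T) (case_prod Q)) F"
    using F unfolding fine_cylinder_partition_def by simp
  from disjoint_family_onD[OF this assms(2-4)] have "?cyl G w \<inter> Pi (J3 \<times> T) (case_prod Q)
      \<inter> (?cyl G' w' \<inter> Pi (J3 \<times> T) (case_prod Q)) = {}"
    by simp
  ultimately show False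
    by blast
qed

lemma cell_of_cover:
  assumes F: "fine_cylinder_partition (J3 \<times> T) (case_prod Q) \<Lambda> {} F" and "X \<in> space3 T"
  shows "\<exists>(G, w)\<in>F. X \<in> cell3_set T (cell_of G w)"
proof -
  have "Pi (J3 \<times> T) (case_prod Q) \<subseteq> (\<Union>(G, w)\<in>F. cylinder (J3 \<times> T) (case_prod Q) G w)"
    using F unfolding fine_cylinder_partition_def by simp
  from this locate_in_Pi[of X] have "locate Q X \<in> (\<Union>(G, w)\<in>F. cylinder (J3 \<times> T) (case_prod Q) G w)"
    by (rule subsetD)
  then obtain G w where "(G, w) \<in> F" "locate Q X \<in> cylinder (J3 \<times> T) (case_prod Q) G w"
    by blast
  moreover have "X \<in> cell3_set T (cell_of G w)"
    using calculation \<open>X \<in> space3 T\<close> mem_cell_of_iff fine_cylinder_partition_memD[OF F \<open>(G, w) \<in> F\<close>]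
    by simp
  ultimately show ?thesis
    by blast
qed

lemma gamma_fine_division3_of_partition:
  assumes F: "fine_cylinder_partition (J3 \<times> T) (case_prod Q) (required_coordinates L T) {} F"
  shows "gamma_fine_division3 T L \<delta> ((\<lambda>(G, w). (tag_of T w, cell_of G w)) ` F)"
proof -
  define D where "D = (\<lambda>(G, w). (tag_of T w, cell_of G w)) ` F"
  have D: "\<exists>G w. (G, w) \<in> F \<and> p = (tag_of T w, cell_of G w)" if "p \<in> D" for p
    using that unfolding D_def by auto
  have "gamma_fine_division3 T L \<delta> D"
    unfolding gamma_fine_division3_def division3_def
  proof (intro conjI ballI impI)
    show "finite D"
      using F unfolding D_def fine_cylinder_partition_def by simp
    fix p assume "p \<in> D"
    with D obtain G w where "(G, w) \<in> F" and p: "p = (tag_of T w, cell_of G w)"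
      by blast
    then show "case p of (x, C) \<Rightarrow> x \<in> tags3 T \<and> is_cell3 T C \<and> assoc3 x C"
      "case p of (x, C) \<Rightarrow> gamma_fine L \<delta> x C"
      using gamma_fine_tagged_cell_of fine_cylinder_partition_memD[OF F \<open>(G, w) \<in> F\<close>] by simp_all
    fix q assume "q \<in> D" "p \<noteq> q"
    with D obtain G' w' where "(G', w') \<in> F" and q: "q = (tag_of T w', cell_of G' w')"
      by blast
    with \<open>p \<noteq> q\<close> p have "(G, w) \<noteq> (G', w')"
      by blast
    then show "cell3_set T (snd p) \<inter> cell3_set T (snd q) = {}"
      using cell_of_disjoint[OF F \<open>(G, w) \<in> F\<close> \<open>(G', w') \<in> F\<close>] p q by simp
  next
    show "(\<Union>p\<in>D. cell3_set T (snd p)) = space3 T"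
    proof
      show "(\<Union>p\<in>D. cell3_set T (snd p)) \<subseteq> space3 T"
        unfolding cell3_set_def by blast
      show "space3 T \<subseteq> (\<Union>p\<in>D. cell3_set T (snd p))"
        using cell_of_cover[OF F] unfolding D_def by fastforce
    qed
  qed
  then show ?thesis
    unfolding D_def .
qed

end

theorem theorem6:
  fixes T :: "'a set"
    and L :: "nat \<Rightarrow> ('a \<Rightarrow> ereal) \<Rightarrow> 'a set"
    and \<delta> :: "nat \<Rightarrow> 'a \<Rightarrow> ereal \<Rightarrow> real"
  assumes "infinite T"
    and "\<forall>j\<in>J3. \<forall>x\<in>T \<rightarrow>\<^sub>E UNIV. finite (L j x) \<and> L j x \<subseteq> T"
    and "\<forall>j\<in>J3. \<forall>t\<in>T. \<forall>y. \<delta> j t y > 0"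
  shows "\<exists>D. gamma_fine_division3 T L \<delta> D"
proof -
  define Q where "Q j t = (SOME Q. fine_division1 (\<delta> j t) UNIV Q)" for j t
  have Q: "fine_division1 (\<delta> j t) UNIV (Q j t)" if "j \<in> J3" "t \<in> T" for j t
    unfolding Q_def using fine_division1_UNIV[of "\<delta> j t"] assms(3) that by (blast intro: someI_ex)
  interpret coordinate_divisions T \<delta> Q
    by standard (rule Q)
  have "\<exists>F. fine_cylinder_partition (J3 \<times> T) (case_prod Q) (required_coordinates L T) {} F"
  proof (rule fine_cylinder_partition_exists)
    show "finite (case_prod Q s)" if "s \<in> J3 \<times> T" for s
      using Q that unfolding fine_division1_def by auto
    show "finite (required_coordinates L T w) \<and> required_coordinates L T w \<subseteq> J3 \<times> T" for w
      using required_coordinates_finite_subset[OF assms(2)] .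
  qed
  then show ?thesis
    using gamma_fine_division3_of_partition by blast
qed

end
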